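(* Let $f:\mathbb{R}^m\to\mathbb{R}$ be $C^3$, satisfying the Lojasiewicz gradient inequality at each of its critical points, and let $\{x_k\}$ be a sequence constructed by Backtracking New Q-Newton's method (BNQN) with $0<\tau\le1$. For each $k$ with $\nabla f(x_k)\ne0$ let $e_{1,k},\dots,e_{m,k}$ be an orthonormal basis of eigenvectors of $A_k$, and let $\Lambda_k=\{i:\langle\nabla f(x_k),e_{i,k}\rangle\neq0\}$. Assume that whenever a subsequence $\{x_{k_n}\}$ converges, $$\liminf_{n\to\infty}\frac{\min_{i\in\Lambda_{k_n}}\|A_{k_n}e_{i,k_n}\|}{\max_{i\in\Lambda_{k_n}}\|A_{k_n}e_{i,k_n}\|}>0.$$ If $\tau=1$, assume moreover that $\nabla f$ satisfies the Lojasiewicz gradient inequality. Then either $\lim_{k\to\infty}\|x_k\|=\infty$ or $\{x_k\}$ converges to a critical point of $f$.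
   Context: BNQN: fix $m+1$ distinct reals $\delta_0,\dots,\delta_m$, $\tau>0$, $0<\gamma_0<1$, $\kappa=\frac12\min_{i\neq j}|\delta_i-\delta_j|$; $\mathrm{minsp}(A)$ is the minimum absolute value of eigenvalues of a symmetric matrix $A$, and $pr_{A,\pm}$ the orthogonal projections onto the spans of eigenvectors with positive/negative eigenvalues. Given $x_k$: if $\nabla f(x_k)=0$ set $x_{k+1}=x_k$; otherwise let $j$ be the smallest index with $\mathrm{minsp}(\nabla^2 f(x_k)+\delta_j\|\nabla f(x_k)\|^\tau I)\ge\kappa\|\nabla f(x_k)\|^\tau$, $A_k=\nabla^2 f(x_k)+\delta_j\|\nabla f(x_k)\|^\tau I$, $v_k=A_k^{-1}\nabla f(x_k)$, $w_k=pr_{A_k,+}v_k-pr_{A_k,-}v_k$, $\widehat{w_k}=w_k/\max\{1,\|w_k\|\}$, $\gamma_k$ the largest $\gamma\in\{\gamma_03^{-n}:n\ge0\}$ with $f(x_k-\gamma\widehat{w_k})-f(x_k)\le-\gamma\langle\widehat{w_k},\nabla f(x_k)\rangle/3$, and $x_{k+1}=x_k-\gamma_k\widehat{w_k}$. A $C^1$ function $g$ satisfies the Lojasiewicz gradient inequality at $x^*$ if there exist a neighbourhood $U$ of $x^*$, $0<\mu<1$, $C>0$ with $|g(x)-g(x^* )|^\mu\le C\|\nabla g(x)\|$ for all $x\in U$. "$\nabla f$ satisfies the Lojasiewicz gradient inequality" means $F(x,y)=\langle\nabla f(x),y\rangle$ on $\mathbb{R}^{2m}$ satisfies it at every point of $\mathbb{R}^{2m}$.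 *)

theory Defs
  imports "HOL-Analysis.Analysis"
begin

definition grad :: "('a::euclidean_space \<Rightarrow> real) \<Rightarrow> 'a \<Rightarrow> 'a" where
  "grad g x = (\<Sum>b\<in>Basis. frechet_derivative g (at x) b *\<^sub>R b)"

definition hess :: "(real^'m \<Rightarrow> real) \<Rightarrow> real^'m \<Rightarrow> real^'m^'m" where
  "hess f x = (\<chi> i j. frechet_derivative (\<lambda>y. grad f y $ i) (at x) (axis j 1))"

definition C1 :: "('a::euclidean_space \<Rightarrow> real) \<Rightarrow> bool" where
  "C1 g \<longleftrightarrow> (\<forall>x. g differentiable (at x)) \<and>
      (\<forall>b\<in>Basis. continuous_on UNIV (\<lambda>x. frechet_derivative g (at x) b))"

definition C3 :: "(real^'m \<Rightarrow> real) \<Rightarrow> bool" where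
  "C3 f \<longleftrightarrow> C1 f \<and> (\<forall>i. C1 (\<lambda>x. grad f x $ i)) \<and> (\<forall>i j. C1 (\<lambda>x. hess f x $ i $ j))"

definition lojasiewicz_at :: "('a::euclidean_space \<Rightarrow> real) \<Rightarrow> 'a \<Rightarrow> bool" where
  "lojasiewicz_at g xs \<longleftrightarrow> (\<exists>U \<mu> C. open U \<and> xs \<in> U \<and> 0 < \<mu> \<and> \<mu> < 1 \<and> 0 < C \<and>
      (\<forall>x\<in>U. \<bar>g x - g xs\<bar> powr \<mu> \<le> C * norm (grad g x)))"

definition eigenvalues :: "real^'m^'m \<Rightarrow> real set" where
  "eigenvalues A = {l. \<exists>v. v \<noteq> 0 \<and> A *v v = l *\<^sub>R v}"

definition minsp :: "real^'m^'m \<Rightarrow> real" where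
  "minsp A = Min (abs ` eigenvalues A)"

definition eigspan :: "real^'m^'m \<Rightarrow> (real \<Rightarrow> bool) \<Rightarrow> (real^'m) set" where
  "eigspan A P = span {v. \<exists>l. P l \<and> A *v v = l *\<^sub>R v}"

definition orth_proj :: "(real^'m) set \<Rightarrow> real^'m \<Rightarrow> real^'m" where
  "orth_proj S v = (THE p. p \<in> S \<and> (\<forall>s\<in>S. (v - p) \<bullet> s = 0))"

definition bnqn_kappa :: "(nat \<Rightarrow> real) \<Rightarrow> nat \<Rightarrow> real" where
  "bnqn_kappa \<delta> m = (1/2) * Min {\<bar>\<delta> i - \<delta> j\<bar> | i j. i \<le> m \<and> j \<le> m \<and> i \<noteq> j}"

definition bnqn_j :: "(nat \<Rightarrow> real) \<Rightarrow> real \<Rightarrow> (real^'m \<Rightarrow> real) \<Rightarrow> real^'m \<Rightarrow> nat" where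
  "bnqn_j \<delta> \<tau> f x = (LEAST j. j \<le> CARD('m) \<and>
      minsp (hess f x + (\<delta> j * norm (grad f x) powr \<tau>) *\<^sub>R mat 1)
        \<ge> bnqn_kappa \<delta> CARD('m) * norm (grad f x) powr \<tau>)"

definition bnqn_A :: "(nat \<Rightarrow> real) \<Rightarrow> real \<Rightarrow> (real^'m \<Rightarrow> real) \<Rightarrow> real^'m \<Rightarrow> real^'m^'m" where
  "bnqn_A \<delta> \<tau> f x = hess f x + (\<delta> (bnqn_j \<delta> \<tau> f x) * norm (grad f x) powr \<tau>) *\<^sub>R mat 1"

definition bnqn_w :: "(nat \<Rightarrow> real) \<Rightarrow> real \<Rightarrow> (real^'m \<Rightarrow> real) \<Rightarrow> real^'m \<Rightarrow> real^'m" where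
  "bnqn_w \<delta> \<tau> f x =
     (let A = bnqn_A \<delta> \<tau> f x; v = matrix_inv A *v grad f x
      in orth_proj (eigspan A (\<lambda>l. l > 0)) v - orth_proj (eigspan A (\<lambda>l. l < 0)) v)"

definition bnqn_what :: "(nat \<Rightarrow> real) \<Rightarrow> real \<Rightarrow> (real^'m \<Rightarrow> real) \<Rightarrow> real^'m \<Rightarrow> real^'m" where
  "bnqn_what \<delta> \<tau> f x = (let w = bnqn_w \<delta> \<tau> f x in (1 / max 1 (norm w)) *\<^sub>R w)"

text \<open>largest \<gamma> in {\<gamma>0 3^-n} satisfying the Armijo condition = smallest such n\<close>
definition bnqn_gamma :: "(nat \<Rightarrow> real) \<Rightarrow> real \<Rightarrow> real \<Rightarrow> (real^'m \<Rightarrow> real) \<Rightarrow> real^'m \<Rightarrow> real" where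
  "bnqn_gamma \<delta> \<tau> \<gamma>0 f x =
     (let wh = bnqn_what \<delta> \<tau> f x;
          n = (LEAST n. f (x - (\<gamma>0 * (1/3)^n) *\<^sub>R wh) - f x
                          \<le> - (\<gamma>0 * (1/3)^n) * (wh \<bullet> grad f x) / 3)
      in \<gamma>0 * (1/3)^n)"

definition bnqn_step :: "(nat \<Rightarrow> real) \<Rightarrow> real \<Rightarrow> real \<Rightarrow> (real^'m \<Rightarrow> real) \<Rightarrow> real^'m \<Rightarrow> real^'m" where
  "bnqn_step \<delta> \<tau> \<gamma>0 f x =
     (if grad f x = 0 then x else x - bnqn_gamma \<delta> \<tau> \<gamma>0 f x *\<^sub>R bnqn_what \<delta> \<tau> f x)"

end

theory Submission
  imports Defs
begin

text \<open>Each BNQN step is a backtracking line search along w = |A|^{-1} \<nabla>f, where |A| has the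
  eigenvectors of A and eigenvalues of modulus at least \<kappa> |\<nabla>f|^\<tau>; so f decreases along the
  sequence. Near a non-critical point the eigenvalues of A are bounded above and below
  uniformly, which forces a uniform decrease of f at every visit; as f is bounded below along a
  convergent subsequence, every limit point is critical. If |x k| does not tend to infinity,
  there is such a limit point p. Near p the eigenvalue-ratio hypothesis keeps the angle between
  w and \<nabla>f away from 90 degrees, and with the Armijo condition and the Lojasiewicz inequality at
  p this bounds each step by the drop of (f - f p)^(1-\<mu>), as in Absil, Mahony and Andrews. So
  the iterates have finite length once they come close enough to p, and converge to p.\<close>

section \<open>Orthonormal eigenframes\<close>

definition orthonormal_frame :: "('n::finite \<Rightarrow> real^'n) \<Rightarrow> bool" where
  "orthonormal_frame e \<longleftrightarrow> (\<forall>i i'. e i \<bullet> e i' = (if i = i' then 1 else 0))"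

lemma orthonormal_frame_inner:
  "orthonormal_frame e \<Longrightarrow> e i \<bullet> e i' = (if i = i' then 1 else 0)"
  by (simp add: orthonormal_frame_def)

lemma orthonormal_frame_norm: "orthonormal_frame e \<Longrightarrow> norm (e i) = 1"
  by (simp add: orthonormal_frame_def norm_eq_sqrt_inner)

lemma inner_sum_orthonormal_frame:
  assumes "orthonormal_frame e"
  shows "(\<Sum>i\<in>I. a i *\<^sub>R e i) \<bullet> e j = (if j \<in> I then a j else 0)"
  by (simp add: inner_sum_left orthonormal_frame_inner[OF assms] if_distrib cong: if_cong)

lemma orthonormal_frame_expansion:
  assumes e: "orthonormal_frame e"
  shows "v = (\<Sum>i\<in>UNIV. (v \<bullet> e i) *\<^sub>R e i)"
proof -
  have "inj e"
    by (rule injI) (metis orthonormal_frame_inner[OF e] one_neq_zero)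
  moreover have "independent (range e)"
  proof (rule pairwise_orthogonal_independent)
    show "pairwise orthogonal (range e)"
      using e by (auto simp: pairwise_def orthogonal_def orthonormal_frame_inner)
    show "0 \<notin> range e" using orthonormal_frame_norm[OF e] by (metis imageE norm_zero zero_neq_one)
  qed
  ultimately have span: "UNIV \<subseteq> span (range e)"
    using card_eq_dim[of "range e" UNIV] by (simp add: card_image dim_UNIV)
  define u where "u = v - (\<Sum>i\<in>UNIV. (v \<bullet> e i) *\<^sub>R e i)"
  have "u \<bullet> e j = 0" for j
    by (simp add: u_def inner_diff_left inner_sum_orthonormal_frame[OF e])
  hence "orthogonal u u" using span
    by (intro orthogonal_to_span[of u "range e"]) (auto simp: orthogonal_def)
  thus ?thesis by (simp add: u_def orthogonal_def)
qed

lemma orthonormal_frame_eq_0_iff: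
  assumes "orthonormal_frame e"
  shows "v = 0 \<longleftrightarrow> (\<forall>i. v \<bullet> e i = 0)"
  using orthonormal_frame_expansion[OF assms, of v] by auto

lemma matrix_vector_mult_eigen_sum:
  fixes A :: "real^'n^'n"
  assumes eig: "\<And>i. A *v e i = lam i *\<^sub>R e i"
  shows "A *v (\<Sum>i\<in>I. a i *\<^sub>R e i) = (\<Sum>i\<in>I. (a i * lam i) *\<^sub>R e i)"
proof -
  have "A *v (\<Sum>i\<in>I. a i *\<^sub>R e i) = (\<Sum>i\<in>I. A *v (a i *\<^sub>R e i))"
    by (simp add: linear_sum[OF matrix_vector_mul_linear])
  thus ?thesis by (simp add: matrix_vector_mult_scaleR eig)
qed

lemma inner_matrix_vector_mult_eigen:
  assumes e: "orthonormal_frame e" and eig: "\<And>i. A *v e i = lam i *\<^sub>R e i"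
  shows "(A *v u) \<bullet> e j = lam j * (u \<bullet> e j)"
  by (subst orthonormal_frame_expansion[OF e, of u])
     (simp add: matrix_vector_mult_eigen_sum[OF eig] inner_sum_orthonormal_frame[OF e])

lemma eigenvalue_eq_frame_eigenvalue:
  assumes e: "orthonormal_frame e" and eig: "\<And>i. A *v e i = lam i *\<^sub>R e i"
    and u: "A *v u = l *\<^sub>R u" and nz: "u \<bullet> e j \<noteq> 0"
  shows "lam j = l"
  using inner_matrix_vector_mult_eigen[OF e eig, of u j] nz by (simp add: u)

lemma orth_proj_eqI:
  assumes S: "subspace S" and p: "p \<in> S" and orth: "\<And>s. s \<in> S \<Longrightarrow> (v - p) \<bullet> s = 0"
  shows "orth_proj S v = p"
  unfolding orth_proj_def
proof (rule the_equality)
  show "p \<in> S \<and> (\<forall>s\<in>S. (v - p) \<bullet> s = 0)" using p orth by auto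
  fix q assume q: "q \<in> S \<and> (\<forall>s\<in>S. (v - q) \<bullet> s = 0)"
  have "p - q \<in> S" using p q S by (simp add: subspace_diff)
  hence "(v - q) \<bullet> (p - q) - (v - p) \<bullet> (p - q) = 0" using q orth by auto
  hence "(p - q) \<bullet> (p - q) = 0" by (simp add: inner_diff_left[symmetric])
  thus "q = p" by simp
qed

lemma orth_proj_eigspan:
  assumes e: "orthonormal_frame e" and eig: "\<And>i. A *v e i = lam i *\<^sub>R e i"
  shows "orth_proj (eigspan A P) v = (\<Sum>i | P (lam i). (v \<bullet> e i) *\<^sub>R e i)"
  unfolding eigspan_def
proof (rule orth_proj_eqI)
  let ?E = "{v. \<exists>l. P l \<and> A *v v = l *\<^sub>R v}"
  show "(\<Sum>i | P (lam i). (v \<bullet> e i) *\<^sub>R e i) \<in> span ?E"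
    by (intro span_sum span_mul span_base) (auto simp: eig)
  fix s assume s: "s \<in> span ?E"
  have "v = (\<Sum>i | P (lam i). (v \<bullet> e i) *\<^sub>R e i) + (\<Sum>i | \<not> P (lam i). (v \<bullet> e i) *\<^sub>R e i)"
    by (subst (1) orthonormal_frame_expansion[OF e, of v], subst sum.union_disjoint[symmetric])
       (auto intro: sum.cong)
  hence "v - (\<Sum>i | P (lam i). (v \<bullet> e i) *\<^sub>R e i) = (\<Sum>i | \<not> P (lam i). (v \<bullet> e i) *\<^sub>R e i)"
    by (simp add: algebra_simps)
  moreover have "orthogonal (\<Sum>i | \<not> P (lam i). (v \<bullet> e i) *\<^sub>R e i) s"
  proof (rule orthogonal_to_span[OF s])
    fix y assume "y \<in> ?E"
    then obtain l where "P l" "A *v y = l *\<^sub>R y" by auto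
    hence "y \<bullet> e i = 0" if "\<not> P (lam i)" for i
      using eigenvalue_eq_frame_eigenvalue[OF e eig, of y l i] that by auto
    hence "y \<bullet> (\<Sum>i | \<not> P (lam i). (v \<bullet> e i) *\<^sub>R e i) = 0"
      by (simp add: inner_sum_right)
    thus "orthogonal (\<Sum>i | \<not> P (lam i). (v \<bullet> e i) *\<^sub>R e i) y"
      by (simp add: orthogonal_def inner_commute)
  qed
  ultimately show "(v - (\<Sum>i | P (lam i). (v \<bullet> e i) *\<^sub>R e i)) \<bullet> s = 0"
    by (simp add: orthogonal_def)
qed simp

lemma matrix_inv_eigen_frame:
  assumes e: "orthonormal_frame e" and eig: "\<And>i. A *v e i = lam i *\<^sub>R e i"
    and nz: "\<And>i. lam i \<noteq> 0"
  shows "matrix_inv A *v g = (\<Sum>i\<in>UNIV. (g \<bullet> e i / lam i) *\<^sub>R e i)"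
proof -
  have "inj ((*v) A)"
  proof (rule injI)
    fix u v assume "A *v u = A *v v"
    hence "(A *v (u - v)) \<bullet> e i = 0" for i by (simp add: matrix_vector_mult_diff_distrib)
    hence "lam i * ((u - v) \<bullet> e i) = 0" for i
      by (simp add: inner_matrix_vector_mult_eigen[OF e eig])
    hence "(u - v) \<bullet> e i = 0" for i using nz by (metis mult_eq_0_iff)
    thus "u = v" using orthonormal_frame_eq_0_iff[OF e, of "u - v"] by simp
  qed
  hence "invertible A"
    by (simp add: invertible_left_inverse matrix_left_invertible_injective)
  hence "matrix_inv A ** A = mat 1"
    unfolding invertible_def matrix_inv_def by (rule someI_ex[THEN conjunct2])
  moreover have "A *v (\<Sum>i\<in>UNIV. (g \<bullet> e i / lam i) *\<^sub>R e i) = g"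
    using nz by (simp add: matrix_vector_mult_eigen_sum[OF eig] orthonormal_frame_expansion[OF e, symmetric])
  ultimately show ?thesis by (metis matrix_vector_mul_assoc matrix_vector_mul_lid)
qed

text \<open>With A = \<Sum> lam_i e_i e_i^T, the direction w of BNQN is |A|^{-1} g.\<close>

lemma signed_newton_direction_eigen_frame:
  assumes e: "orthonormal_frame e" and eig: "\<And>i. A *v e i = lam i *\<^sub>R e i"
    and nz: "\<And>i. lam i \<noteq> 0"
  shows "orth_proj (eigspan A (\<lambda>l. l > 0)) (matrix_inv A *v g)
       - orth_proj (eigspan A (\<lambda>l. l < 0)) (matrix_inv A *v g)
       = (\<Sum>i\<in>UNIV. (g \<bullet> e i / \<bar>lam i\<bar>) *\<^sub>R e i)"
proof -
  define u where "u i = ((matrix_inv A *v g) \<bullet> e i) *\<^sub>R e i" for i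
  have u: "u i = (g \<bullet> e i / lam i) *\<^sub>R e i" for i
    by (simp add: u_def matrix_inv_eigen_frame[OF e eig nz] inner_sum_orthonormal_frame[OF e])
  have "(\<Sum>i | lam i > 0. u i) - (\<Sum>i | lam i < 0. u i)
        = (\<Sum>i\<in>UNIV. (if lam i > 0 then u i else 0) - (if lam i < 0 then u i else 0))"
    by (simp add: sum.inter_filter[symmetric] sum_subtractf)
  also have "\<dots> = (\<Sum>i\<in>UNIV. (g \<bullet> e i / \<bar>lam i\<bar>) *\<^sub>R e i)"
    using nz by (intro sum.cong) (auto simp: u abs_if scaleR_diff_left[symmetric])
  finally show ?thesis by (simp add: orth_proj_eigspan[OF e eig] u_def)
qed

lemma eigenvalues_add_scaled_id:
  assumes e: "orthonormal_frame e" and eig: "\<And>i. A *v e i = lam i *\<^sub>R e i"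
  shows "eigenvalues (A + t *\<^sub>R mat 1) = range (\<lambda>i. lam i + t)"
proof (intro equalityI subsetI)
  fix l assume "l \<in> eigenvalues (A + t *\<^sub>R mat 1)"
  then obtain v where v: "v \<noteq> 0" "A *v v = (l - t) *\<^sub>R v"
    by (auto simp: eigenvalues_def matrix_vector_mult_add_rdistrib scaleR_matrix_vector_assoc[symmetric] algebra_simps)
  obtain j where "v \<bullet> e j \<noteq> 0" using v(1) orthonormal_frame_eq_0_iff[OF e] by blast
  hence "lam j = l - t" by (rule eigenvalue_eq_frame_eigenvalue[OF e eig v(2)])
  thus "l \<in> range (\<lambda>i. lam i + t)" by (auto intro!: image_eqI[of _ _ j])
next
  fix l assume "l \<in> range (\<lambda>i. lam i + t)"
  then obtain i where "l = lam i + t" by blast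
  moreover have "e i \<noteq> 0" using orthonormal_frame_norm[OF e, of i] by auto
  ultimately show "l \<in> eigenvalues (A + t *\<^sub>R mat 1)"
    by (auto simp: eigenvalues_def matrix_vector_mult_add_rdistrib scaleR_matrix_vector_assoc[symmetric] eig algebra_simps)
qed

lemma minsp_add_scaled_id:
  assumes "orthonormal_frame e" and "\<And>i. A *v e i = lam i *\<^sub>R e i"
  shows "minsp (A + t *\<^sub>R mat 1) = Min (range (\<lambda>i. \<bar>lam i + t\<bar>))"
  by (simp add: minsp_def eigenvalues_add_scaled_id[OF assms] image_image)

lemma finite_bnqn_kappa_set:
  fixes \<delta> :: "nat \<Rightarrow> real"
  shows "finite {\<bar>\<delta> i - \<delta> j\<bar> | i j. i \<le> m \<and> j \<le> m \<and> i \<noteq> j}"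
proof -
  have "{\<bar>\<delta> i - \<delta> j\<bar> | i j. i \<le> m \<and> j \<le> m \<and> i \<noteq> j}
        \<subseteq> (\<lambda>(i, j). \<bar>\<delta> i - \<delta> j\<bar>) ` ({..m} \<times> {..m})"
    by auto
  thus ?thesis by (rule finite_subset) (intro finite_imageI finite_cartesian_product; simp)
qed

lemma bnqn_kappa_le:
  assumes "i \<le> m" "j \<le> m" "i \<noteq> j"
  shows "2 * bnqn_kappa \<delta> m \<le> \<bar>\<delta> i - \<delta> j\<bar>"
  using assms by (auto simp: bnqn_kappa_def intro!: Min_le finite_bnqn_kappa_set)

lemma bnqn_kappa_pos:
  assumes "inj_on \<delta> {0..m}" "1 \<le> m"
  shows "0 < bnqn_kappa \<delta> m"
proof -
  have "{\<bar>\<delta> i - \<delta> j\<bar> | i j. i \<le> m \<and> j \<le> m \<and> i \<noteq> j} \<noteq> {}" using assms(2) by blast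
  hence "0 < Min {\<bar>\<delta> i - \<delta> j\<bar> | i j. i \<le> m \<and> j \<le> m \<and> i \<noteq> j}"
    using assms(1) by (subst Min_gr_iff[OF finite_bnqn_kappa_set]) (auto simp: inj_on_def)
  thus ?thesis by (simp add: bnqn_kappa_def)
qed

text \<open>Pigeonhole: the shifts \<delta> j * s are 2 \<kappa> s apart, so each of the CARD('n) < m + 1 values
  \<mu> i rules out at most one index j.\<close>

lemma exists_bnqn_shift_far_from:
  fixes \<mu> :: "'n::finite \<Rightarrow> real"
  assumes m: "CARD('n) \<le> m" and s: "0 < s"
  shows "\<exists>j\<le>m. \<forall>i. bnqn_kappa \<delta> m * s \<le> \<bar>\<mu> i + \<delta> j * s\<bar>"
proof -
  define bad where "bad i = {j\<in>{0..m}. \<bar>\<mu> i + \<delta> j * s\<bar> < bnqn_kappa \<delta> m * s}" for i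
  have "card (bad i) \<le> 1" for i
  proof -
    have "a = b" if a: "a \<in> bad i" and b: "b \<in> bad i" for a b
    proof (rule ccontr)
      assume "a \<noteq> b"
      hence "2 * bnqn_kappa \<delta> m * s \<le> \<bar>\<delta> a - \<delta> b\<bar> * s"
        using a b bnqn_kappa_le[of a m b \<delta>] s by (auto simp: bad_def)
      also have "\<dots> = \<bar>(\<mu> i + \<delta> a * s) - (\<mu> i + \<delta> b * s)\<bar>"
        using s by (simp add: abs_mult left_diff_distrib[symmetric])
      finally show False using a b by (auto simp: bad_def)
    qed
    moreover have "finite (bad i)" by (simp add: bad_def)
    ultimately show ?thesis by (simp add: card_le_Suc0_iff_eq)
  qed
  hence "card (\<Union>i. bad i) \<le> CARD('n)"
    using card_UN_le[of UNIV bad] sum_mono[of UNIV "\<lambda>i. card (bad i)" "\<lambda>_. 1"] by simp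
  hence "\<not> {0..m} \<subseteq> (\<Union>i. bad i)"
    using m card_mono[of "\<Union>i. bad i" "{0..m}"] by (auto simp: bad_def)
  thus ?thesis by (auto simp: bad_def not_less)
qed

lemma bnqn_j_spec:
  fixes f :: "real^'n::finite \<Rightarrow> real"
  assumes g: "grad f x \<noteq> 0" and e: "orthonormal_frame e"
    and eig: "\<And>i. bnqn_A \<delta> \<tau> f x *v e i = lam i *\<^sub>R e i"
  shows "bnqn_j \<delta> \<tau> f x \<le> CARD('n)"
    and "bnqn_kappa \<delta> CARD('n) * norm (grad f x) powr \<tau> \<le> \<bar>lam i\<bar>"
proof -
  define s where "s = norm (grad f x) powr \<tau>"
  define c where "c = \<delta> (bnqn_j \<delta> \<tau> f x) * s"
  define P where "P j \<longleftrightarrow> j \<le> CARD('n) \<and>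
      bnqn_kappa \<delta> CARD('n) * s \<le> minsp (hess f x + (\<delta> j * s) *\<^sub>R mat 1)" for j
  have minsp: "minsp (hess f x + t *\<^sub>R mat 1) = Min (range (\<lambda>i. \<bar>lam i + (t - c)\<bar>))" for t
  proof -
    have "minsp (hess f x + t *\<^sub>R mat 1) = minsp (bnqn_A \<delta> \<tau> f x + (t - c) *\<^sub>R mat 1)"
      by (simp add: bnqn_A_def c_def s_def algebra_simps)
    thus ?thesis by (simp only: minsp_add_scaled_id[OF e eig])
  qed
  obtain j where "j \<le> CARD('n)" "\<forall>i. bnqn_kappa \<delta> CARD('n) * s \<le> \<bar>(lam i - c) + \<delta> j * s\<bar>"
    using exists_bnqn_shift_far_from[where \<mu>="\<lambda>i. lam i - c" and \<delta>=\<delta> and s=s] g by (auto simp: s_def)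
  hence "P j" by (simp add: P_def minsp Min_ge_iff algebra_simps)
  hence "P (bnqn_j \<delta> \<tau> f x)"
    unfolding bnqn_j_def P_def[symmetric] s_def[symmetric] by (rule LeastI)
  thus "bnqn_j \<delta> \<tau> f x \<le> CARD('n)" by (simp add: P_def)
  have "bnqn_kappa \<delta> CARD('n) * s \<le> Min (range (\<lambda>i. \<bar>lam i\<bar>))"
    using \<open>P (bnqn_j \<delta> \<tau> f x)\<close> by (simp add: P_def minsp c_def)
  also have "\<dots> \<le> \<bar>lam i\<bar>" by simp
  finally show "bnqn_kappa \<delta> CARD('n) * norm (grad f x) powr \<tau> \<le> \<bar>lam i\<bar>" by (simp add: s_def)
qed

lemma power2_norm_orthonormal_frame:
  assumes e: "orthonormal_frame e"
  shows "norm g ^ 2 = (\<Sum>i\<in>UNIV. (g \<bullet> e i)^2)"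
proof -
  have "g \<bullet> g = (\<Sum>i\<in>UNIV. (g \<bullet> e i)^2)"
    by (subst (2) orthonormal_frame_expansion[OF e, of g]) (simp add: inner_sum_right power2_eq_square)
  thus ?thesis by (simp add: power2_norm_eq_inner)
qed

context
  fixes e :: "'n::finite \<Rightarrow> real^'n" and lam :: "'n \<Rightarrow> real" and g :: "real^'n"
  assumes e: "orthonormal_frame e" and nz: "\<And>i. lam i \<noteq> 0"
begin

lemma inner_abs_inverse_frame_ge:
  assumes M: "0 < M" "\<And>i. g \<bullet> e i \<noteq> 0 \<Longrightarrow> \<bar>lam i\<bar> \<le> M"
  shows "norm g ^ 2 / M \<le> (\<Sum>i\<in>UNIV. (g \<bullet> e i / \<bar>lam i\<bar>) *\<^sub>R e i) \<bullet> g"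
proof -
  have "norm g ^ 2 / M = (\<Sum>i\<in>UNIV. (g \<bullet> e i)^2 / M)"
    by (simp add: power2_norm_orthonormal_frame[OF e] sum_divide_distrib)
  also have "\<dots> \<le> (\<Sum>i\<in>UNIV. (g \<bullet> e i)^2 / \<bar>lam i\<bar>)"
  proof (rule sum_mono)
    fix i show "(g \<bullet> e i)^2 / M \<le> (g \<bullet> e i)^2 / \<bar>lam i\<bar>"
      using M nz[of i] by (cases "g \<bullet> e i = 0") (auto intro: divide_left_mono)
  qed
  also have "\<dots> = (\<Sum>i\<in>UNIV. (g \<bullet> e i / \<bar>lam i\<bar>) *\<^sub>R e i) \<bullet> g"
    by (simp add: inner_sum_left inner_commute[of "e _" g] power2_eq_square)
  finally show ?thesis .
qed

lemma norm_abs_inverse_frame_le: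
  assumes L: "0 < L" "\<And>i. g \<bullet> e i \<noteq> 0 \<Longrightarrow> L \<le> \<bar>lam i\<bar>"
  shows "norm (\<Sum>i\<in>UNIV. (g \<bullet> e i / \<bar>lam i\<bar>) *\<^sub>R e i) \<le> norm g / L"
proof -
  let ?w = "\<Sum>i\<in>UNIV. (g \<bullet> e i / \<bar>lam i\<bar>) *\<^sub>R e i"
  have "norm ?w ^ 2 = (\<Sum>i\<in>UNIV. (g \<bullet> e i)^2 / (lam i)^2)"
    by (simp add: power2_norm_orthonormal_frame[OF e] inner_sum_orthonormal_frame[OF e]
        power_divide)
  also have "\<dots> \<le> (\<Sum>i\<in>UNIV. (g \<bullet> e i)^2 / L^2)"
  proof (rule sum_mono)
    fix i show "(g \<bullet> e i)^2 / (lam i)^2 \<le> (g \<bullet> e i)^2 / L^2"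
    proof (cases "g \<bullet> e i = 0")
      case False
      hence "L^2 \<le> (lam i)^2" using L by (metis abs_le_square_iff abs_of_pos)
      thus ?thesis using L(1) nz[of i] by (intro divide_left_mono) auto
    qed simp
  qed
  also have "\<dots> = (norm g / L)^2"
    by (simp add: power2_norm_orthonormal_frame[OF e] sum_divide_distrib power_divide)
  finally show ?thesis using L(1) by (meson divide_nonneg_pos norm_ge_zero power2_le_imp_le)
qed

end

section \<open>Backtracking line search\<close>

lemma C1_has_derivative_grad:
  fixes f :: "'a::euclidean_space \<Rightarrow> real"
  assumes "C1 f"
  shows "(f has_derivative (\<lambda>h. grad f x \<bullet> h)) (at x)"
proof -
  have d: "(f has_derivative frechet_derivative f (at x)) (at x)"
    using assms by (simp add: C1_def frechet_derivative_works)
  hence lin: "linear (frechet_derivative f (at x))" by (simp add: has_derivative_linear)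
  have "frechet_derivative f (at x) h = grad f x \<bullet> h" for h
  proof -
    have "frechet_derivative f (at x) h = frechet_derivative f (at x) (\<Sum>b\<in>Basis. (h \<bullet> b) *\<^sub>R b)"
      by (simp add: euclidean_representation)
    also have "\<dots> = (\<Sum>b\<in>Basis. (h \<bullet> b) * frechet_derivative f (at x) b)"
      by (simp add: linear_sum[OF lin] linear_scale[OF lin])
    also have "\<dots> = grad f x \<bullet> h"
      by (auto simp: grad_def inner_sum_right inner_commute intro!: sum.cong)
    finally show ?thesis .
  qed
  thus ?thesis using d by (metis (no_types, lifting) ext)
qed

lemma C1_continuous_on_grad:
  fixes f :: "'a::euclidean_space \<Rightarrow> real"
  assumes "C1 f"
  shows "continuous_on UNIV (grad f)"
proof -
  have "continuous_on UNIV (\<lambda>x. \<Sum>b\<in>Basis. frechet_derivative f (at x) b *\<^sub>R b)"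
    using assms unfolding C1_def by (intro continuous_intros) auto
  thus ?thesis by (simp add: grad_def[abs_def])
qed

lemma C1_continuous_on:
  fixes f :: "'a::euclidean_space \<Rightarrow> real"
  assumes "C1 f"
  shows "continuous_on UNIV f"
  using assms unfolding C1_def
  by (meson continuous_at_imp_continuous_on differentiable_imp_continuous_within)

lemma C1_decrease_along_direction:
  fixes f :: "'a::euclidean_space \<Rightarrow> real"
  assumes C1: "C1 f" and osc: "\<And>y. y \<in> cball x r \<Longrightarrow> norm (grad f y - grad f x) \<le> \<epsilon>"
    and u: "norm u \<le> 1" and \<gamma>: "0 \<le> \<gamma>" "\<gamma> \<le> r"
  shows "f (x - \<gamma> *\<^sub>R u) - f x \<le> - \<gamma> * (u \<bullet> grad f x) + \<gamma> * \<epsilon>"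
proof -
  define h where "h t = f (x - t *\<^sub>R u)" for t
  have "(h has_derivative (\<lambda>d. grad f (x - t *\<^sub>R u) \<bullet> (- d *\<^sub>R u))) (at t within {0..\<gamma>})" for t
    unfolding h_def
    by (rule has_derivative_compose[OF _ C1_has_derivative_grad[OF C1]])
       (auto intro!: derivative_eq_intros)
  from mvt_very_simple[OF \<gamma>(1) this]
  obtain t where t: "t \<in> {0..\<gamma>}" "h \<gamma> - h 0 = grad f (x - t *\<^sub>R u) \<bullet> (- \<gamma> *\<^sub>R u)"
    by auto
  have "norm ((x - t *\<^sub>R u) - x) \<le> r"
    using t(1) u \<gamma> by (auto intro: order_trans[OF mult_left_le[of "norm u" t]])
  hence "norm (grad f (x - t *\<^sub>R u) - grad f x) \<le> \<epsilon>"
    by (intro osc) (simp add: dist_norm norm_minus_commute)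
  hence "u \<bullet> (grad f x - grad f (x - t *\<^sub>R u)) \<le> \<epsilon>"
    using u norm_cauchy_schwarz[of u "grad f x - grad f (x - t *\<^sub>R u)"]
    by (smt (verit) mult_left_le_one_le norm_ge_zero norm_minus_commute)
  moreover have "f (x - \<gamma> *\<^sub>R u) - f x
      = - \<gamma> * (u \<bullet> grad f x) + \<gamma> * (u \<bullet> (grad f x - grad f (x - t *\<^sub>R u)))"
    using t(2) by (simp add: h_def inner_commute inner_diff_right algebra_simps)
  ultimately show ?thesis using \<gamma>(1) by (simp add: mult_left_mono)
qed

lemma exists_geometric_le:
  fixes \<gamma>0 r :: real
  assumes "0 < r" "0 < \<gamma>0"
  shows "\<exists>N. \<gamma>0 * (1/3)^N \<le> r"
proof -
  obtain N where "(1/3::real)^N < r / \<gamma>0" using real_arch_pow_inv[of "r/\<gamma>0" "1/3"] assms by auto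
  thus ?thesis using assms by (intro exI[of _ N]) (simp add: field_simps)
qed

lemma bnqn_gamma_armijo:
  fixes f :: "real^'n::finite \<Rightarrow> real"
  assumes "0 < \<gamma>0" and N: "\<gamma>0 * (1/3)^N \<le> r"
    and armijo: "\<And>\<gamma>. 0 < \<gamma> \<Longrightarrow> \<gamma> \<le> r \<Longrightarrow>
        f (x - \<gamma> *\<^sub>R bnqn_what \<delta> \<tau> f x) - f x \<le> - \<gamma> * (bnqn_what \<delta> \<tau> f x \<bullet> grad f x) / 3"
  shows "\<gamma>0 * (1/3)^N \<le> bnqn_gamma \<delta> \<tau> \<gamma>0 f x"
    and "f (x - bnqn_gamma \<delta> \<tau> \<gamma>0 f x *\<^sub>R bnqn_what \<delta> \<tau> f x) - f x
           \<le> - bnqn_gamma \<delta> \<tau> \<gamma>0 f x * (bnqn_what \<delta> \<tau> f x \<bullet> grad f x) / 3"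
    and "0 < bnqn_gamma \<delta> \<tau> \<gamma>0 f x"
proof -
  define Q where "Q n \<longleftrightarrow> f (x - (\<gamma>0 * (1/3)^n) *\<^sub>R bnqn_what \<delta> \<tau> f x) - f x
      \<le> - (\<gamma>0 * (1/3)^n) * (bnqn_what \<delta> \<tau> f x \<bullet> grad f x) / 3" for n
  have gamma: "bnqn_gamma \<delta> \<tau> \<gamma>0 f x = \<gamma>0 * (1/3) ^ (LEAST n. Q n)"
    by (simp add: bnqn_gamma_def Let_def Q_def)
  have "Q N" unfolding Q_def using assms by (intro armijo) auto
  hence "(1/3::real)^N \<le> (1/3) ^ (LEAST n. Q n)" and "Q (LEAST n. Q n)"
    by (auto intro: power_decreasing Least_le LeastI)
  thus "\<gamma>0 * (1/3)^N \<le> bnqn_gamma \<delta> \<tau> \<gamma>0 f x"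
    and "f (x - bnqn_gamma \<delta> \<tau> \<gamma>0 f x *\<^sub>R bnqn_what \<delta> \<tau> f x) - f x
           \<le> - bnqn_gamma \<delta> \<tau> \<gamma>0 f x * (bnqn_what \<delta> \<tau> f x \<bullet> grad f x) / 3"
    using assms(1) by (simp_all add: gamma Q_def)
  show "0 < bnqn_gamma \<delta> \<tau> \<gamma>0 f x" using assms(1) by (simp add: gamma)
qed

section \<open>Sequences of finite length\<close>

lemma powr_le_affine:
  fixes t q :: real
  assumes t: "0 \<le> t" and q: "0 < q" "q < 1"
  shows "t powr q \<le> 1 - q + q * t"
proof (cases "t = 0")
  case False
  hence "(1 - q) * ln 1 + q * ln t \<le> ln ((1 - q) *\<^sub>R 1 + q *\<^sub>R t)"
    using t q by (intro concave_onD[OF ln_concave]) auto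
  hence "exp (q * ln t) \<le> 1 - q + q * t"
    using False t q by (simp add: add_pos_nonneg ln_ge_iff)
  thus ?thesis using False t by (simp add: powr_def)
qed (use q in simp)

lemma powr_diff_ge:
  fixes a b q :: real
  assumes b: "0 \<le> b" "b \<le> a" and a: "0 < a" and q: "0 < q" "q < 1"
  shows "q * (a - b) / a powr (1 - q) \<le> a powr q - b powr q"
proof -
  have "(b / a) powr q \<le> 1 - q + q * (b / a)" using b a q by (intro powr_le_affine) auto
  hence "b powr q \<le> a powr q * (1 - q + q * (b / a))"
    using b a by (simp add: powr_divide divide_le_eq mult.commute)
  hence "q * (a powr q - a powr q * (b / a)) \<le> a powr q - b powr q" by (simp add: algebra_simps)
  moreover have "a powr q - a powr q * (b / a) = (a - b) / a powr (1 - q)"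
    using a by (simp add: powr_diff field_simps)
  ultimately show ?thesis by simp
qed

lemma strict_mono_choice:
  assumes "\<And>n K. \<exists>k\<ge>K. P n k"
  shows "\<exists>r :: nat \<Rightarrow> nat. strict_mono r \<and> (\<forall>n. P n (r n))"
proof -
  have "\<forall>n K. \<exists>k. K \<le> k \<and> P n k" using assms by blast
  then obtain h where h: "\<And>n K. K \<le> h n K \<and> P n (h n K)" by metis
  define r where "r = rec_nat (h 0 0) (\<lambda>n k. h (Suc n) (Suc k))"
  have "r n < r (Suc n)" for n
    using h[where n="Suc n" and K="Suc (r n)"] by (simp add: r_def Suc_le_eq)
  hence "strict_mono r" by (simp add: strict_mono_Suc_iff)
  moreover have "P n (r n)" for n using h by (cases n) (simp_all add: r_def)
  ultimately show ?thesis by blast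
qed

text \<open>The finite-length argument of Absil, Mahony and Andrews: if, as long as the iterates stay
  in a ball around p, each step is controlled by the drop of the potential \<phi> \<circ> V, then starting
  close enough to p the iterates never leave the ball and their total length is finite.\<close>

lemma summable_norm_increments_if_potential_bound:
  fixes x :: "nat \<Rightarrow> 'a::real_normed_vector" and V :: "nat \<Rightarrow> real" and \<phi> :: "real \<Rightarrow> real"
  assumes V_nonneg: "\<And>k. 0 \<le> V k"
    and \<phi>_nonneg: "\<And>s. 0 \<le> s \<Longrightarrow> 0 \<le> \<phi> s"
    and step: "\<And>k. K \<le> k \<Longrightarrow> dist (x k) p < R \<Longrightarrow>
                 norm (x (Suc k) - x k) \<le> c * (\<phi> (V k) - \<phi> (V (Suc k)))"
    and start: "dist (x K) p + c * \<phi> (V K) < R" and c: "0 < c"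
  shows "summable (\<lambda>k. norm (x (Suc k) - x k))"
proof -
  define S where "S n = (\<Sum>i<n. norm (x (Suc (K + i)) - x (K + i)))" for n
  have S: "S n \<le> c * (\<phi> (V K) - \<phi> (V (K + n))) \<and> dist (x (K + n)) p \<le> dist (x K) p + S n" for n
  proof (induction n)
    case (Suc n)
    have "0 \<le> \<phi> (V (K + n))" using \<phi>_nonneg V_nonneg by auto
    hence "dist (x (K + n)) p < R" using Suc c start by (smt (verit) mult_left_mono)
    hence "norm (x (Suc (K + n)) - x (K + n)) \<le> c * (\<phi> (V (K + n)) - \<phi> (V (Suc (K + n))))"
      by (intro step) auto
    moreover have "dist (x (Suc (K + n))) p \<le> dist (x (K + n)) p + norm (x (Suc (K + n)) - x (K + n))"
      using dist_triangle[of "x (Suc (K + n))" p "x (K + n)"] by (simp add: dist_norm add.commute)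
    ultimately show ?case using Suc by (simp add: S_def algebra_simps)
  qed (simp add: S_def)
  have "S n \<le> c * \<phi> (V K)" for n
    using S[of n] \<phi>_nonneg[OF V_nonneg[of "K + n"]] c by (smt (verit) mult_left_mono)
  hence "summable (\<lambda>i. norm (x (Suc (i + K)) - x (i + K)))"
    by (intro summableI_nonneg_bounded[where x="c * \<phi> (V K)"]) (auto simp: S_def add.commute)
  thus ?thesis by (subst summable_iff_shift[symmetric, of _ K]) simp
qed

lemma convergent_if_summable_norm_increments:
  fixes x :: "nat \<Rightarrow> 'a::banach"
  assumes "summable (\<lambda>k. norm (x (Suc k) - x k))"
  shows "convergent x"
proof -
  have "(\<lambda>n. x 0 + (\<Sum>i<n. x (Suc i) - x i)) \<longlonglongrightarrow> x 0 + (\<Sum>i. x (Suc i) - x i)"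
    using summable_LIMSEQ[OF summable_norm_cancel[OF assms]] by (intro tendsto_add) auto
  thus ?thesis by (auto simp: convergent_def sum_lessThan_telescope)
qed

locale bnqn_sequence =
  fixes f :: "real^'m::finite \<Rightarrow> real" and \<delta> :: "nat \<Rightarrow> real" and \<tau> \<gamma>0 :: real
    and x :: "nat \<Rightarrow> real^'m" and e :: "nat \<Rightarrow> 'm \<Rightarrow> real^'m"
  assumes C1: "C1 f"
    and hess_continuous: "\<And>i j. continuous_on UNIV (\<lambda>y. hess f y $ i $ j)"
    and lojasiewicz_critical: "\<And>p. grad f p = 0 \<Longrightarrow> lojasiewicz_at f p"
    and delta_distinct: "inj_on \<delta> {0..CARD('m)}"
    and tau_pos: "0 < \<tau>"
    and gamma0_pos: "0 < \<gamma>0"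
    and x_Suc_step: "\<And>k. x (Suc k) = bnqn_step \<delta> \<tau> \<gamma>0 f (x k)"
    and e_frame: "\<And>k. grad f (x k) \<noteq> 0 \<Longrightarrow> orthonormal_frame (e k)"
    and e_eigen: "\<And>k i. grad f (x k) \<noteq> 0 \<Longrightarrow> \<exists>l. bnqn_A \<delta> \<tau> f (x k) *v e k i = l *\<^sub>R e k i"
    and eigen_ratio_liminf: "\<And>r p. strict_mono r \<Longrightarrow> (\<lambda>n. x (r n)) \<longlonglongrightarrow> p \<Longrightarrow>
           Liminf sequentially (\<lambda>n. ereal
             (Min ((\<lambda>i. norm (bnqn_A \<delta> \<tau> f (x (r n)) *v e (r n) i))
                     ` {i. grad f (x (r n)) \<bullet> e (r n) i \<noteq> 0}) /
              Max ((\<lambda>i. norm (bnqn_A \<delta> \<tau> f (x (r n)) *v e (r n) i))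
                     ` {i. grad f (x (r n)) \<bullet> e (r n) i \<noteq> 0}))) > 0"
begin

definition "g k = grad f (x k)"
definition "A k = bnqn_A \<delta> \<tau> f (x k)"
definition "lam k i = (SOME l. A k *v e k i = l *\<^sub>R e k i)"
definition "w k = bnqn_w \<delta> \<tau> f (x k)"
definition "w_hat k = bnqn_what \<delta> \<tau> f (x k)"
definition "step_size k = bnqn_gamma \<delta> \<tau> \<gamma>0 f (x k)"
definition "kappa = bnqn_kappa \<delta> CARD('m)"
definition "eigen_ratio k = Min ((\<lambda>i. norm (A k *v e k i)) ` {i. g k \<bullet> e k i \<noteq> 0}) /
                            Max ((\<lambda>i. norm (A k *v e k i)) ` {i. g k \<bullet> e k i \<noteq> 0})"

lemma kappa_pos: "0 < kappa"
  unfolding kappa_def by (rule bnqn_kappa_pos[OF delta_distinct]) (simp add: Suc_le_eq)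

lemma orthonormal_frame_e: "g k \<noteq> 0 \<Longrightarrow> orthonormal_frame (e k)"
  using e_frame by (simp add: g_def)

lemma A_mult_e: "g k \<noteq> 0 \<Longrightarrow> A k *v e k i = lam k i *\<^sub>R e k i"
  unfolding lam_def A_def using e_eigen[of k i] by (simp add: g_def) (rule someI_ex)

lemma kappa_le_abs_lam: "g k \<noteq> 0 \<Longrightarrow> kappa * norm (g k) powr \<tau> \<le> \<bar>lam k i\<bar>"
  using bnqn_j_spec(2)[OF _ orthonormal_frame_e A_mult_e[unfolded A_def]] by (simp add: kappa_def g_def)

lemma bnqn_j_le: "g k \<noteq> 0 \<Longrightarrow> bnqn_j \<delta> \<tau> f (x k) \<le> CARD('m)"
  using bnqn_j_spec(1)[OF _ orthonormal_frame_e A_mult_e[unfolded A_def]] by (simp add: g_def)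

lemma abs_lam_pos:
  assumes "g k \<noteq> 0"
  shows "0 < \<bar>lam k i\<bar>"
proof -
  have "0 < kappa * norm (g k) powr \<tau>" using assms kappa_pos by simp
  thus ?thesis using kappa_le_abs_lam[OF assms, of i] by linarith
qed

lemma lam_nonzero: "g k \<noteq> 0 \<Longrightarrow> lam k i \<noteq> 0"
  using abs_lam_pos by fastforce

lemma norm_A_e: "g k \<noteq> 0 \<Longrightarrow> norm (A k *v e k i) = \<bar>lam k i\<bar>"
  by (simp add: A_mult_e orthonormal_frame_norm[OF orthonormal_frame_e])

lemma w_eq: "g k \<noteq> 0 \<Longrightarrow> w k = (\<Sum>i\<in>UNIV. (g k \<bullet> e k i / \<bar>lam k i\<bar>) *\<^sub>R e k i)"
  using signed_newton_direction_eigen_frame[OF orthonormal_frame_e A_mult_e[unfolded A_def] lam_nonzero]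
  by (simp add: w_def bnqn_w_def Let_def g_def)

lemma w_hat_eq: "w_hat k = (1 / max 1 (norm (w k))) *\<^sub>R w k"
  by (simp add: w_hat_def w_def bnqn_what_def Let_def)

lemma norm_w_hat_le: "norm (w_hat k) \<le> 1"
  by (simp add: w_hat_eq field_simps)

lemma inner_w_hat_g: "w_hat k \<bullet> g k = (w k \<bullet> g k) / max 1 (norm (w k))"
  by (simp add: w_hat_eq)

lemma inner_w_g_ge:
  assumes "g k \<noteq> 0" "0 < M" "\<And>i. g k \<bullet> e k i \<noteq> 0 \<Longrightarrow> \<bar>lam k i\<bar> \<le> M"
  shows "norm (g k) ^ 2 / M \<le> w k \<bullet> g k"
  using inner_abs_inverse_frame_ge[OF orthonormal_frame_e lam_nonzero] assms by (simp add: w_eq)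

lemma norm_w_le:
  assumes "g k \<noteq> 0" "0 < L" "\<And>i. g k \<bullet> e k i \<noteq> 0 \<Longrightarrow> L \<le> \<bar>lam k i\<bar>"
  shows "norm (w k) \<le> norm (g k) / L"
  using norm_abs_inverse_frame_le[OF orthonormal_frame_e lam_nonzero] assms by (simp add: w_eq)

lemma inner_w_hat_g_pos:
  assumes "g k \<noteq> 0"
  shows "0 < w_hat k \<bullet> g k"
proof -
  have M: "0 < Max (range (\<lambda>i. \<bar>lam k i\<bar>))" using abs_lam_pos[OF assms] by (simp add: Max_gr_iff)
  have "0 < norm (g k) ^ 2 / Max (range (\<lambda>i. \<bar>lam k i\<bar>))" using assms M by simp
  also have "\<dots> \<le> w k \<bullet> g k" by (rule inner_w_g_ge[OF assms M]) simp
  finally show ?thesis by (simp add: inner_w_hat_g)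
qed

lemma x_Suc_critical: "g k = 0 \<Longrightarrow> x (Suc k) = x k"
  by (simp add: x_Suc_step bnqn_step_def g_def)

lemma x_Suc: "g k \<noteq> 0 \<Longrightarrow> x (Suc k) = x k - step_size k *\<^sub>R w_hat k"
  by (simp add: x_Suc_step bnqn_step_def g_def step_size_def w_hat_def)

lemma armijo_step:
  assumes gk: "g k \<noteq> 0" and osc: "\<And>y. y \<in> cball (x k) r \<Longrightarrow> norm (grad f y - g k) \<le> w_hat k \<bullet> g k / 2"
    and N: "\<gamma>0 * (1/3)^N \<le> r"
  shows "\<gamma>0 * (1/3)^N \<le> step_size k" and "0 < step_size k"
    and "f (x (Suc k)) - f (x k) \<le> - step_size k * (w_hat k \<bullet> g k) / 3"
proof -
  have "f (x k - \<gamma> *\<^sub>R w_hat k) - f (x k) \<le> - \<gamma> * (w_hat k \<bullet> g k) / 3"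
    if "0 < \<gamma>" "\<gamma> \<le> r" for \<gamma>
  proof -
    have "f (x k - \<gamma> *\<^sub>R w_hat k) - f (x k) \<le> - \<gamma> * (w_hat k \<bullet> g k) + \<gamma> * (w_hat k \<bullet> g k / 2)"
      using C1_decrease_along_direction[OF C1, of "x k" r "w_hat k \<bullet> g k / 2" "w_hat k" \<gamma>]
        osc norm_w_hat_le that by (simp add: g_def)
    moreover have "0 < \<gamma> * (w_hat k \<bullet> g k)" using inner_w_hat_g_pos[OF gk] that by simp
    ultimately show ?thesis by linarith
  qed
  note backtracking = bnqn_gamma_armijo[OF gamma0_pos N this[unfolded w_hat_def g_def]]
  show "\<gamma>0 * (1/3)^N \<le> step_size k" "0 < step_size k"
    using backtracking(1,3) by (simp_all add: step_size_def)
  show "f (x (Suc k)) - f (x k) \<le> - step_size k * (w_hat k \<bullet> g k) / 3"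
    using backtracking(2) by (simp add: x_Suc[OF gk] step_size_def w_hat_def g_def)
qed

lemma armijo_step_exists:
  assumes gk: "g k \<noteq> 0"
  shows "0 < step_size k" and "f (x (Suc k)) - f (x k) \<le> - step_size k * (w_hat k \<bullet> g k) / 3"
proof -
  have "isCont (grad f) (x k)"
    using C1_continuous_on_grad[OF C1] by (simp add: continuous_on_eq_continuous_at)
  then obtain d where d: "0 < d"
    "\<And>y. dist y (x k) < d \<Longrightarrow> dist (grad f y) (grad f (x k)) < w_hat k \<bullet> g k / 2"
    using inner_w_hat_g_pos[OF gk] unfolding continuous_at_eps_delta by (metis half_gt_zero)
  have osc: "norm (grad f y - g k) \<le> w_hat k \<bullet> g k / 2" if "y \<in> cball (x k) (d/2)" for y
    using d(2)[of y] that d(1) by (simp add: dist_norm g_def norm_minus_commute)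
  obtain N where "\<gamma>0 * (1/3::real)^N \<le> d/2"
    using exists_geometric_le[of "d/2" \<gamma>0] d gamma0_pos by auto
  from armijo_step[OF gk osc this]
  show "0 < step_size k" "f (x (Suc k)) - f (x k) \<le> - step_size k * (w_hat k \<bullet> g k) / 3"
    by auto
qed

lemma f_x_Suc_le: "f (x (Suc k)) \<le> f (x k)"
proof (cases "g k = 0")
  case False
  hence "0 < step_size k * (w_hat k \<bullet> g k)"
    using armijo_step_exists(1) inner_w_hat_g_pos by simp
  thus ?thesis using armijo_step_exists(2)[OF False] by linarith
qed (simp add: x_Suc_critical)

lemma f_x_antimono: "i \<le> j \<Longrightarrow> f (x j) \<le> f (x i)"
  using decseq_SucI[of "\<lambda>k. f (x k)"] f_x_Suc_le by (simp add: decseq_def)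

lemma tendsto_f_x_subseq:
  assumes "(\<lambda>n. x (r n)) \<longlonglongrightarrow> p"
  shows "(\<lambda>n. f (x (r n))) \<longlonglongrightarrow> f p"
proof -
  have "isCont f p" using C1_continuous_on[OF C1] by (simp add: continuous_on_eq_continuous_at)
  thus ?thesis using assms by (rule isCont_tendsto_compose)
qed

lemma f_limit_point_le:
  assumes r: "strict_mono r" and lim: "(\<lambda>n. x (r n)) \<longlonglongrightarrow> p"
  shows "f p \<le> f (x k)"
proof (rule tendsto_le[OF trivial_limit_sequentially tendsto_const tendsto_f_x_subseq[OF lim]])
  show "\<forall>\<^sub>F n in sequentially. f (x (r n)) \<le> f (x k)"
    using eventually_ge_at_top[of k]
    by eventually_elim (meson f_x_antimono le_trans r seq_suble)
qed

subsection \<open>Limit points are critical\<close>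

definition "hess_bound y = (\<Sum>i\<in>UNIV. \<Sum>j\<in>UNIV. \<bar>hess f y $ i $ j\<bar>)"
definition "delta_bound = (\<Sum>j\<in>{0..CARD('m)}. \<bar>\<delta> j\<bar>)"

lemma hess_bound_nonneg: "0 \<le> hess_bound y"
  by (simp add: hess_bound_def sum_nonneg)

lemma delta_bound_nonneg: "0 \<le> delta_bound"
  by (simp add: delta_bound_def sum_nonneg)

lemma continuous_on_hess_bound: "continuous_on UNIV hess_bound"
  unfolding hess_bound_def[abs_def] by (intro continuous_intros hess_continuous)

lemma abs_lam_le:
  assumes gk: "g k \<noteq> 0"
  shows "\<bar>lam k i\<bar> \<le> hess_bound (x k) + delta_bound * norm (g k) powr \<tau>"
proof -
  define c where "c = \<delta> (bnqn_j \<delta> \<tau> f (x k)) * norm (g k) powr \<tau>"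
  have "\<bar>lam k i\<bar> = norm (hess f (x k) *v e k i + c *\<^sub>R e k i)"
    using norm_A_e[OF gk, of i]
    by (simp add: A_def bnqn_A_def c_def g_def matrix_vector_mult_add_rdistrib
        scaleR_matrix_vector_assoc[symmetric])
  also have "\<dots> \<le> onorm ((*v) (hess f (x k))) * norm (e k i) + \<bar>c\<bar> * norm (e k i)"
    by (intro norm_triangle_le add_mono onorm) simp_all
  also have "\<dots> \<le> hess_bound (x k) + \<bar>c\<bar>"
    using onorm_le_matrix_component_sum by (simp add: hess_bound_def orthonormal_frame_norm[OF orthonormal_frame_e[OF gk]])
  also have "\<bar>c\<bar> \<le> delta_bound * norm (g k) powr \<tau>"
  proof -
    have "\<bar>\<delta> (bnqn_j \<delta> \<tau> f (x k))\<bar> \<le> delta_bound"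
      unfolding delta_bound_def by (rule member_le_sum) (use bnqn_j_le[OF gk] in auto)
    thus ?thesis by (simp add: c_def abs_mult mult_right_mono)
  qed
  finally show ?thesis by simp
qed

text \<open>Near a non-critical point p the gradient norm is pinched between a = |\<nabla>f p|/2 and
  3 a, so all eigenvalues of A k lie in [L, M] with L, M independent of k; this bounds
  w_hat \<bullet> g from below.\<close>

lemma inner_w_hat_g_uniformly_pos_near:
  assumes gp: "grad f p \<noteq> 0"
  obtains \<rho> c where "0 < \<rho>" "0 < c" "\<And>k. dist (x k) p < \<rho> \<Longrightarrow> g k \<noteq> 0 \<and> c \<le> w_hat k \<bullet> g k"
proof -
  define a where "a = norm (grad f p) / 2"
  have a: "0 < a" using gp by (simp add: a_def)
  have "isCont (\<lambda>y. norm (grad f y)) p" "isCont hess_bound p"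
    using C1_continuous_on_grad[OF C1] continuous_on_hess_bound
    by (auto intro: continuous_intros simp: continuous_on_eq_continuous_at)
  then obtain d1 d2 where d: "0 < d1" "0 < d2"
    "\<And>y. dist y p < d1 \<Longrightarrow> dist (norm (grad f y)) (norm (grad f p)) < a"
    "\<And>y. dist y p < d2 \<Longrightarrow> dist (hess_bound y) (hess_bound p) < 1"
    using a unfolding continuous_at_eps_delta by (metis zero_less_one)
  define M where "M = hess_bound p + 1 + delta_bound * (3 * a) powr \<tau>"
  define L where "L = kappa * a powr \<tau>"
  have M: "0 < M"
    using hess_bound_nonneg[of p] delta_bound_nonneg by (simp add: M_def add_pos_nonneg)
  have L: "0 < L" unfolding L_def using kappa_pos a by simp
  show thesis
  proof (rule that[of "min d1 d2" "(a^2 / M) / max 1 (3 * a / L)"])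
    fix k assume "dist (x k) p < min d1 d2"
    hence close: "\<bar>norm (g k) - 2 * a\<bar> < a" "\<bar>hess_bound (x k) - hess_bound p\<bar> < 1"
      using d(3,4)[of "x k"] by (auto simp: g_def a_def dist_real_def)
    have ng: "a < norm (g k)" "norm (g k) < 3 * a" using close(1) by arith+
    have hb: "hess_bound (x k) < hess_bound p + 1" using close(2) by arith
    have gk: "g k \<noteq> 0" using ng a by auto
    have "delta_bound * norm (g k) powr \<tau> \<le> delta_bound * (3 * a) powr \<tau>"
      using ng a tau_pos delta_bound_nonneg by (intro mult_left_mono powr_mono2) auto
    hence lam_M: "\<bar>lam k i\<bar> \<le> M" for i using abs_lam_le[OF gk, of i] hb by (simp add: M_def)
    have "L \<le> kappa * norm (g k) powr \<tau>"
      using ng a tau_pos kappa_pos by (auto simp: L_def intro!: mult_left_mono powr_mono2)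
    hence lam_L: "L \<le> \<bar>lam k i\<bar>" for i using kappa_le_abs_lam[OF gk, of i] by simp
    have "a^2 / M \<le> norm (g k) ^ 2 / M" using ng a M by (intro divide_right_mono power_mono) auto
    also have "\<dots> \<le> w k \<bullet> g k" using inner_w_g_ge[OF gk M] lam_M by blast
    finally have wg: "a^2 / M \<le> w k \<bullet> g k" .
    have "norm (w k) \<le> norm (g k) / L" using norm_w_le[OF gk L] lam_L by blast
    also have "\<dots> \<le> 3 * a / L" using ng L by (simp add: divide_right_mono)
    finally have "norm (w k) \<le> 3 * a / L" .
    hence "(a^2 / M) / max 1 (3 * a / L) \<le> w_hat k \<bullet> g k"
      unfolding inner_w_hat_g using wg a M
      by (intro frac_le) (auto simp: max_def intro: order_trans[OF _ wg])
    with gk show "g k \<noteq> 0 \<and> (a^2 / M) / max 1 (3 * a / L) \<le> w_hat k \<bullet> g k" by blast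
  qed (use d a M in auto)
qed

text \<open>With w_hat \<bullet> g \<ge> c near p, uniform continuity of \<nabla>f gives one radius on which the Armijo
  test succeeds for all these k, hence a uniform lower bound on the step size and on the
  decrease of f.\<close>

lemma uniform_decrease_near_noncritical:
  assumes gp: "grad f p \<noteq> 0"
  obtains \<rho> D where "0 < \<rho>" "0 < D" "\<And>k. dist (x k) p < \<rho> \<Longrightarrow> f (x (Suc k)) \<le> f (x k) - D"
proof -
  obtain \<rho> c where \<rho>: "0 < \<rho>" and c: "0 < c"
    and wg: "\<And>k. dist (x k) p < \<rho> \<Longrightarrow> g k \<noteq> 0 \<and> c \<le> w_hat k \<bullet> g k"
    using inner_w_hat_g_uniformly_pos_near[OF gp] by blast
  have "uniformly_continuous_on (cball p 1) (grad f)"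
    by (rule compact_uniformly_continuous)
       (auto intro: continuous_on_subset[OF C1_continuous_on_grad[OF C1]])
  then obtain d where d: "0 < d"
    "\<And>y z. y \<in> cball p 1 \<Longrightarrow> z \<in> cball p 1 \<Longrightarrow> dist y z < d \<Longrightarrow> dist (grad f y) (grad f z) < c/2"
    unfolding uniformly_continuous_on_def using c by (metis half_gt_zero)
  define r where "r = min (d/2) (1/2)"
  have r: "0 < r" using d by (simp add: r_def)
  obtain N where N: "\<gamma>0 * (1/3::real)^N \<le> r" using exists_geometric_le[OF r gamma0_pos] by blast
  show thesis
  proof (rule that[of "min \<rho> (1/2)" "\<gamma>0 * (1/3::real)^N * c / 3"])
    fix k assume xk: "dist (x k) p < min \<rho> (1/2)"
    with wg have gk: "g k \<noteq> 0" and c_le: "c \<le> w_hat k \<bullet> g k" by auto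
    have "norm (grad f y - g k) \<le> w_hat k \<bullet> g k / 2" if y: "y \<in> cball (x k) r" for y
    proof -
      have "y \<in> cball p 1" "x k \<in> cball p 1" "dist y (x k) < d"
        using y xk dist_triangle[of y p "x k"] d(1) by (auto simp: r_def dist_commute)
      thus ?thesis using d(2) c_le by (fastforce simp: dist_norm g_def)
    qed
    note armijo = armijo_step[OF gk this N]
    have "\<gamma>0 * (1/3)^N * c \<le> step_size k * (w_hat k \<bullet> g k)"
      using armijo(1,2) c_le c gamma0_pos by (intro mult_mono) auto
    thus "f (x (Suc k)) \<le> f (x k) - \<gamma>0 * (1/3)^N * c / 3" using armijo(3) by simp
  qed (use \<rho> c gamma0_pos in auto)
qed

lemma limit_point_critical:
  assumes r: "strict_mono r" and lim: "(\<lambda>n. x (r n)) \<longlonglongrightarrow> p"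
  shows "grad f p = 0"
proof (rule ccontr)
  assume "grad f p \<noteq> 0"
  then obtain \<rho> D where \<rho>: "0 < \<rho>" and D: "0 < D"
    and decrease: "\<And>k. dist (x k) p < \<rho> \<Longrightarrow> f (x (Suc k)) \<le> f (x k) - D"
    using uniform_decrease_near_noncritical by blast
  obtain n0 where n0: "\<And>n. n \<ge> n0 \<Longrightarrow> dist (x (r n)) p < \<rho>"
    using lim \<rho> unfolding lim_sequentially by blast
  have "f (x (r (n0 + n))) \<le> f (x (r n0)) - real n * D" for n
  proof (induction n)
    case (Suc n)
    have "Suc (r (n0 + n)) \<le> r (n0 + Suc n)" using r by (simp add: strict_mono_def Suc_le_eq)
    hence "f (x (r (n0 + Suc n))) \<le> f (x (Suc (r (n0 + n))))" by (rule f_x_antimono)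
    also have "\<dots> \<le> f (x (r (n0 + n))) - D" by (rule decrease[OF n0]) simp
    finally show ?case using Suc by (simp add: algebra_simps)
  qed simp
  moreover obtain n where "f (x (r n0)) - f p < real n * D" using D ex_less_of_nat_mult by blast
  ultimately show False using f_limit_point_le[OF r lim, of "r (n0 + n)"] by (smt (verit))
qed

subsection \<open>Convergence to a critical limit point\<close>

lemma angle_w_hat_g:
  assumes gk: "g k \<noteq> 0" and \<rho>: "0 < \<rho>" "\<rho> \<le> eigen_ratio k"
  shows "\<rho> * norm (w_hat k) * norm (g k) \<le> w_hat k \<bullet> g k"
proof -
  define S where "S = (\<lambda>i. \<bar>lam k i\<bar>) ` {i. g k \<bullet> e k i \<noteq> 0}"
  have "S \<noteq> {}"
    using gk orthonormal_frame_eq_0_iff[OF orthonormal_frame_e[OF gk], of "g k"] by (auto simp: S_def)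
  hence S: "finite S" "S \<noteq> {}" by (auto simp: S_def)
  have ratio: "eigen_ratio k = Min S / Max S"
    using norm_A_e[OF gk] by (simp add: eigen_ratio_def S_def image_image)
  have Min: "0 < Min S" using S abs_lam_pos[OF gk] by (auto simp: S_def Min_gr_iff)
  hence Max: "0 < Max S" using Max_ge[OF S(1) Min_in[OF S]] by linarith
  have "\<rho> * norm (w k) * norm (g k) \<le> (Min S / Max S) * (norm (g k) / Min S) * norm (g k)"
    using \<rho> ratio Min Max S
    by (intro mult_mono norm_w_le[OF gk Min]) (auto simp: S_def)
  also have "\<dots> = norm (g k) ^ 2 / Max S" using Min by (simp add: power2_eq_square)
  also have "\<dots> \<le> w k \<bullet> g k" using S by (intro inner_w_g_ge[OF gk Max]) (auto simp: S_def)
  finally have "\<rho> * norm (w k) * norm (g k) \<le> w k \<bullet> g k" .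
  moreover have "0 < 1 / max 1 (norm (w k))" by simp
  ultimately have "1 / max 1 (norm (w k)) * (\<rho> * norm (w k) * norm (g k))
                   \<le> 1 / max 1 (norm (w k)) * (w k \<bullet> g k)"
    by (rule mult_left_mono[OF _ less_imp_le])
  thus ?thesis by (simp add: w_hat_eq mult_ac)
qed

lemma eigen_ratio_bounded_below_near:
  assumes r: "strict_mono r" and lim: "(\<lambda>n. x (r n)) \<longlonglongrightarrow> p"
  shows "\<exists>R>0. \<exists>\<rho>>0. \<exists>K. \<forall>k\<ge>K. dist (x k) p < R \<longrightarrow> g k \<noteq> 0 \<longrightarrow> \<rho> \<le> eigen_ratio k"
proof (rule ccontr)
  assume "\<not> ?thesis"
  hence contra: "\<And>R \<rho> K. 0 < R \<Longrightarrow> 0 < \<rho> \<Longrightarrow> \<exists>k\<ge>K. dist (x k) p < R \<and> g k \<noteq> 0 \<and> eigen_ratio k < \<rho>"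
    by (meson not_le)
  define P where "P n k \<longleftrightarrow> dist (x k) p < inverse (Suc n) \<and> g k \<noteq> 0 \<and> eigen_ratio k < inverse (Suc n)"
    for n k
  have ex: "\<exists>k\<ge>K. P n k" for n K
    unfolding P_def by (rule contra) auto
  obtain q where q: "strict_mono q" "\<And>n. P n (q n)"
    using strict_mono_choice[of P, OF ex] by blast
  have le: "dist (x (q n)) p \<le> inverse (Suc n)" "eigen_ratio (q n) \<le> inverse (Suc n)" for n
    using q(2)[of n] by (auto simp: P_def)
  have "(\<lambda>n. dist (x (q n)) p) \<longlonglongrightarrow> 0"
    by (rule tendsto_sandwich[OF _ _ tendsto_const LIMSEQ_inverse_real_of_nat])
       (simp_all add: le always_eventually del: of_nat_Suc)
  hence "(\<lambda>n. x (q n)) \<longlonglongrightarrow> p" by (rule tendsto_dist_iff[THEN iffD2])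
  hence "0 < Liminf sequentially (\<lambda>n. ereal (eigen_ratio (q n)))"
    unfolding eigen_ratio_def A_def g_def by (rule eigen_ratio_liminf[OF q(1)])
  also have "\<dots> \<le> Liminf sequentially (\<lambda>n. ereal (inverse (Suc n)))"
    by (rule Liminf_mono) (simp add: le always_eventually del: of_nat_Suc)
  also have "\<dots> = ereal 0"
    using tendsto_ereal[OF LIMSEQ_inverse_real_of_nat] by (intro lim_imp_Liminf) auto
  finally show False by simp
qed

text \<open>Combining the Armijo decrease, the angle bound and the Lojasiewicz inequality
  (f (x k) - f p)^\<mu> \<le> C |g k| with the concavity of t \<mapsto> t^(1-\<mu>) bounds the step length by
  the drop of the potential (f - f p)^(1-\<mu>).\<close>

lemma step_length_le_potential_drop:
  fixes fp :: real
  assumes gk: "g k \<noteq> 0" and \<rho>: "0 < \<rho>" "\<rho> \<le> eigen_ratio k"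
    and \<mu>: "0 < \<mu>" "\<mu> < 1" and C: "0 < C" and fp: "fp \<le> f (x (Suc k))"
    and loj: "(f (x k) - fp) powr \<mu> \<le> C * norm (g k)"
  shows "norm (x (Suc k) - x k)
         \<le> 3 * C / ((1 - \<mu>) * \<rho>) * ((f (x k) - fp) powr (1 - \<mu>) - (f (x (Suc k)) - fp) powr (1 - \<mu>))"
proof -
  define V0 V1 where "V0 = f (x k) - fp" and "V1 = f (x (Suc k)) - fp"
  define \<Delta> where "\<Delta> = norm (x (Suc k) - x k)"
  define c where "c = 3 * C / ((1 - \<mu>) * \<rho>)"
  have V: "0 \<le> V1" "V1 \<le> V0" using fp f_x_Suc_le[of k] by (simp_all add: V0_def V1_def)
  have G: "0 < norm (g k)" using gk by simp
  have \<Delta>: "\<Delta> = step_size k * norm (w_hat k)"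
    using armijo_step_exists(1)[OF gk] by (simp add: \<Delta>_def x_Suc[OF gk])
  have "\<rho> / 3 * \<Delta> * norm (g k) = step_size k * (\<rho> * norm (w_hat k) * norm (g k)) / 3"
    by (simp add: \<Delta>)
  also have "\<dots> \<le> step_size k * (w_hat k \<bullet> g k) / 3"
    using angle_w_hat_g[OF gk \<rho>] armijo_step_exists(1)[OF gk] by (simp add: mult_left_mono)
  also have "\<dots> \<le> V0 - V1" using armijo_step_exists(2)[OF gk] by (simp add: V0_def V1_def)
  finally have decrease: "\<rho> / 3 * \<Delta> * norm (g k) \<le> V0 - V1" .
  show ?thesis
  proof (cases "V0 = 0")
    case True
    hence "\<Delta> = 0" using decrease V \<rho> G by (simp add: \<Delta>_def mult_le_0_iff zero_less_mult_iff)
    thus ?thesis using True V by (simp add: \<Delta>_def V0_def V1_def)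
  next
    case False
    hence "0 < V0 powr \<mu>" using V by simp
    have "\<Delta> / c = (1 - \<mu>) * (\<rho> / 3 * \<Delta> * norm (g k)) / (C * norm (g k))"
      using C G \<mu> \<rho> by (simp add: c_def field_simps)
    also have "\<dots> \<le> (1 - \<mu>) * (V0 - V1) / (C * norm (g k))"
      using decrease \<mu> C G by (intro divide_right_mono mult_left_mono) auto
    also have "\<dots> \<le> (1 - \<mu>) * (V0 - V1) / V0 powr \<mu>"
      using \<open>0 < V0 powr \<mu>\<close> loj V \<mu> C G by (intro divide_left_mono) (auto simp: V0_def)
    also have "\<dots> \<le> V0 powr (1 - \<mu>) - V1 powr (1 - \<mu>)"
      using powr_diff_ge[OF V, of "1 - \<mu>"] False V \<mu> by simp
    finally have "\<Delta> / c \<le> V0 powr (1 - \<mu>) - V1 powr (1 - \<mu>)" .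
    moreover have "0 < c" using C \<mu> \<rho> by (simp add: c_def)
    ultimately show ?thesis
      unfolding \<Delta>_def V0_def V1_def c_def[symmetric] by (simp add: pos_divide_le_eq mult.commute)
  qed
qed

lemma tendsto_critical_limit_point:
  assumes r: "strict_mono r" and lim: "(\<lambda>n. x (r n)) \<longlonglongrightarrow> p" and gp: "grad f p = 0"
  shows "x \<longlonglongrightarrow> p"
proof -
  obtain U \<mu> C where U: "open U" "p \<in> U" and \<mu>: "0 < \<mu>" "\<mu> < 1" and C: "0 < C"
    and loj: "\<And>y. y \<in> U \<Longrightarrow> \<bar>f y - f p\<bar> powr \<mu> \<le> C * norm (grad f y)"
    using lojasiewicz_critical[OF gp] unfolding lojasiewicz_at_def by blast
  obtain R0 where R0: "0 < R0" "ball p R0 \<subseteq> U" using U openE by blast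
  obtain R \<rho> K where R: "0 < R" and \<rho>: "0 < \<rho>"
    and ratio: "\<And>k. K \<le> k \<Longrightarrow> dist (x k) p < R \<Longrightarrow> g k \<noteq> 0 \<Longrightarrow> \<rho> \<le> eigen_ratio k"
    using eigen_ratio_bounded_below_near[OF r lim] by blast
  define V where "V k = f (x k) - f p" for k
  define \<phi> where "\<phi> t = t powr (1 - \<mu>)" for t
  define c where "c = 3 * C / ((1 - \<mu>) * \<rho>)"
  have V: "0 \<le> V k" "V (Suc k) \<le> V k" for k
    using f_limit_point_le[OF r lim] f_x_Suc_le by (simp_all add: V_def)
  have \<phi>_mono: "\<phi> s \<le> \<phi> t" if "0 \<le> s" "s \<le> t" for s t
    unfolding \<phi>_def using that \<mu> by (intro powr_mono2) auto
  have c: "0 < c" using C \<mu> \<rho> by (simp add: c_def)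
  have step: "norm (x (Suc k) - x k) \<le> c * (\<phi> (V k) - \<phi> (V (Suc k)))"
    if k: "K \<le> k" "dist (x k) p < min R0 R" for k
  proof (cases "g k = 0")
    case True
    thus ?thesis using \<phi>_mono[OF V] c by (simp add: x_Suc_critical)
  next
    case False
    have "x k \<in> U" using k R0 by (auto simp: dist_commute)
    hence "(f (x k) - f p) powr \<mu> \<le> C * norm (g k)"
      using loj V(1)[of k] by (force simp: V_def g_def)
    from step_length_le_potential_drop[OF False \<rho> ratio[OF k(1) _ False] \<mu> C _ this] k V(1)[of "Suc k"]
    show ?thesis by (simp add: V_def \<phi>_def c_def)
  qed
  have "(\<lambda>n. V (r n)) \<longlonglongrightarrow> 0"
    using tendsto_diff[OF tendsto_f_x_subseq[OF lim] tendsto_const[of "f p"]] by (simp add: V_def)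
  hence "(\<lambda>n. \<phi> (V (r n))) \<longlonglongrightarrow> 0"
    unfolding \<phi>_def by (rule tendsto_zero_powrI[OF _ tendsto_const]) (use V \<mu> in auto)
  hence "(\<lambda>n. dist (x (r n)) p + c * \<phi> (V (r n))) \<longlonglongrightarrow> 0 + c * 0"
    by (intro tendsto_add tendsto_mult tendsto_const tendsto_dist_iff[THEN iffD1] lim)
  hence "\<forall>\<^sub>F n in sequentially. dist (x (r n)) p + c * \<phi> (V (r n)) < min R0 R"
    using R0 R by (intro order_tendstoD(2)) auto
  moreover have "\<forall>\<^sub>F n in sequentially. K \<le> r n"
    using eventually_ge_at_top[of K] by eventually_elim (meson le_trans r seq_suble)
  ultimately have "\<forall>\<^sub>F n in sequentially. dist (x (r n)) p + c * \<phi> (V (r n)) < min R0 R \<and> K \<le> r n"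
    by (rule eventually_conj)
  then obtain n where n: "dist (x (r n)) p + c * \<phi> (V (r n)) < min R0 R" "K \<le> r n"
    unfolding eventually_sequentially by auto
  have "summable (\<lambda>k. norm (x (Suc k) - x k))"
  proof (rule summable_norm_increments_if_potential_bound[where K="r n" and p=p])
    show "norm (x (Suc k) - x k) \<le> c * (\<phi> (V k) - \<phi> (V (Suc k)))"
      if "r n \<le> k" "dist (x k) p < min R0 R" for k
      using step that n(2) by simp
  qed (use V n(1) c in \<open>auto simp: \<phi>_def\<close>)
  then obtain L where L: "x \<longlonglongrightarrow> L"
    using convergent_if_summable_norm_increments by (auto simp: convergent_def)
  moreover have "(\<lambda>n. x (r n)) \<longlonglongrightarrow> L" using LIMSEQ_subseq_LIMSEQ[OF L r] by (simp add: o_def)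
  ultimately show ?thesis using LIMSEQ_unique[OF _ lim] by blast
qed

lemma norm_tendsto_infinity_or_tendsto_critical:
  "filterlim (\<lambda>k. norm (x k)) at_top sequentially \<or> (\<exists>p. x \<longlonglongrightarrow> p \<and> grad f p = 0)"
proof (cases "filterlim (\<lambda>k. norm (x k)) at_top sequentially")
  case False
  then obtain Z where Z: "\<And>K. \<exists>k\<ge>K. norm (x k) < Z"
    unfolding filterlim_at_top eventually_sequentially by (meson not_le)
  obtain q :: "nat \<Rightarrow> nat" where q: "strict_mono q" "\<And>n. norm (x (q n)) < Z"
    using strict_mono_choice[of "\<lambda>_ k. norm (x k) < Z", OF Z] by auto
  hence "\<forall>n. (x \<circ> q) n \<in> cball 0 Z" by (simp add: less_imp_le)
  then obtain p r where r: "strict_mono r" and lim: "((x \<circ> q) \<circ> r) \<longlonglongrightarrow> p"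
    using seq_compactE[OF compact_imp_seq_compact[OF compact_cball]] by metis
  have s: "strict_mono (q \<circ> r)" using q(1) r by (rule strict_mono_o)
  have lim': "(\<lambda>n. x ((q \<circ> r) n)) \<longlonglongrightarrow> p" using lim by (simp add: o_def)
  have "grad f p = 0" by (rule limit_point_critical[OF s lim'])
  with tendsto_critical_limit_point[OF s lim'] show ?thesis by blast
qed simp

end

theorem theorem3:
  fixes f :: "real^'m \<Rightarrow> real"
    and \<delta> :: "nat \<Rightarrow> real" and \<tau> \<gamma>0 :: real
    and x :: "nat \<Rightarrow> real^'m"
    and e :: "nat \<Rightarrow> 'm \<Rightarrow> real^'m"
  assumes C3: "C3 f"
    and loj_crit: "\<And>p. grad f p = 0 \<Longrightarrow> lojasiewicz_at f p"
    and delta_distinct: "inj_on \<delta> {0..CARD('m)}"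
    and tau: "0 < \<tau>" "\<tau> \<le> 1"
    and gamma0: "0 < \<gamma>0" "\<gamma>0 < 1"
    and seq: "\<And>k. x (Suc k) = bnqn_step \<delta> \<tau> \<gamma>0 f (x k)"
    and e_orthonormal: "\<And>k i i'. grad f (x k) \<noteq> 0 \<Longrightarrow>
           e k i \<bullet> e k i' = (if i = i' then 1 else 0)"
    and e_eigen: "\<And>k i. grad f (x k) \<noteq> 0 \<Longrightarrow>
           \<exists>l. bnqn_A \<delta> \<tau> f (x k) *v e k i = l *\<^sub>R e k i"
    and ratio: "\<And>r p. strict_mono r \<Longrightarrow> (\<lambda>n. x (r n)) \<longlonglongrightarrow> p \<Longrightarrow>
           Liminf sequentially (\<lambda>n. ereal
             (Min ((\<lambda>i. norm (bnqn_A \<delta> \<tau> f (x (r n)) *v e (r n) i))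
                     ` {i. grad f (x (r n)) \<bullet> e (r n) i \<noteq> 0}) /
              Max ((\<lambda>i. norm (bnqn_A \<delta> \<tau> f (x (r n)) *v e (r n) i))
                     ` {i. grad f (x (r n)) \<bullet> e (r n) i \<noteq> 0}))) > 0"
    and tau1: "\<tau> = 1 \<Longrightarrow> (\<forall>z. lojasiewicz_at (\<lambda>(y, u). grad f y \<bullet> u) z)"
  shows "filterlim (\<lambda>k. norm (x k)) at_top sequentially \<or>
         (\<exists>p. x \<longlonglongrightarrow> p \<and> grad f p = 0)"
proof -
  interpret bnqn_sequence f \<delta> \<tau> \<gamma>0 x e
  proof unfold_locales
    show "C1 f" using C3 by (simp add: C3_def)
    show "continuous_on UNIV (\<lambda>y. hess f y $ i $ j)" for i j
      using C3 unfolding C3_def by (blast intro: C1_continuous_on)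
    show "orthonormal_frame (e k)" if "grad f (x k) \<noteq> 0" for k
      using e_orthonormal[OF that] by (simp add: orthonormal_frame_def)
  qed (use loj_crit delta_distinct tau gamma0 seq e_eigen ratio in auto)
  show ?thesis by (rule norm_tendsto_infinity_or_tendsto_critical)
qed

end
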